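(* Let $k$ be a positive integer and $p$ a prime with $p\equiv 3,5,$ or $7\pmod 8$. Then for every non-negative integer $n$, $\mathcal{J}_6(24n+3)\equiv \mathcal{J}_6(3p^{2k}(8n+1))\pmod 2$.
   Context: Let $q=e^{2\pi i\tau}$, $(a;q)_\infty=\prod_{j\ge0}(1-aq^j)$, and $\eta(\tau)=q^{1/24}(q;q)_\infty$. Define $$j_6(\tau)=\left(\frac{\eta(2\tau)\eta(3\tau)^3}{\eta(\tau)\eta(6\tau)^3}\right)^3-3=\frac1q+\sum_{n\ge0}\mathcal{J}_6(n)q^n.$$ *)

theory Defs
  imports "HOL-Computational_Algebra.Computational_Algebra"
begin

text \<open>(q^k;q^k)_\<infinity> = prod_{j>=1} (1 - q^(k j)) as a formal power series in q.
  Its n-th coefficient equals that of the finite product over j = 1..n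
  (for k >= 1 the remaining factors are 1 + O(q^(n+1))).\<close>
definition qpoch :: "nat \<Rightarrow> rat fps" where
  "qpoch k = Abs_fps (\<lambda>n. (\<Prod>j\<in>{1..n}. (1 - fps_X ^ (k * j))) $ n)"

text \<open>q * (j_6 + 3) = (eta(2t) eta(3t)^3 / (eta(t) eta(6t)^3))^3 * q, as power series in q
  (the q-power prefactors of the eta quotient combine to q^(-1)).\<close>
definition j6_series :: "rat fps" where
  "j6_series = (qpoch 2 * qpoch 3 ^ 3 * inverse (qpoch 1 * qpoch 6 ^ 3)) ^ 3"

text \<open>j_6 = 1/q + sum_{n>=0} J6 n q^n.\<close>
definition J6 :: "nat \<Rightarrow> rat" where
  "J6 n = j6_series $ (n + 1) - (if n = 0 then 3 else 0)"

end

theory Submission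
  imports Defs "HOL-Library.Z2" "HOL-Library.Disjoint_Sets"
begin

text \<open>Everything is reduced modulo 2. With \<open>E = (q;q)\<^sub>\<infinity>\<close> and
  \<open>\<psi>(q) = \<Sum>\<^sub>n q\<^bsup>n(n+1)/2\<^esup>\<close>, the Frobenius identity \<open>f(q)\<^sup>2 \<equiv> f(q\<^sup>2)\<close> and Jacobi's
  \<open>E\<^sup>3 \<equiv> \<psi>\<close> turn \<open>q (j\<^sub>6 + 3)\<close> into \<open>\<psi>(q) / \<psi>(q\<^sup>3)\<^sup>3\<close>. The 3-dissection of \<open>\<psi>\<close> and the
  identity \<open>\<psi>(q) \<psi>(q\<^sup>3) \<equiv> \<psi>(q\<^sup>4) + q \<psi>(q\<^sup>1\<^sup>2)\<close> (an involution on the representations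
  \<open>8N + 4 = x\<^sup>2 + 3y\<^sup>2\<close> with odd \<open>x, y\<close>) then give \<open>J\<^sub>6(24n+3) \<equiv> [8n+1 is a square]\<close>,
  and multiplying \<open>8n+1\<close> by the odd square \<open>p\<^sup>2\<^sup>k\<close> does not change this.
  Jacobi's identity modulo 2 follows from the finite triple product
  \<open>\<Prod>\<^sub>j\<^sub><\<^sub>2\<^sub>n (1 + q\<^bsup>|j-n|\<^esup>) = \<Sum>\<^sub>k [2n choose k]\<^sub>q q\<^bsup>(k-n)(k-n-1)/2\<^esup>\<close>.\<close>

declare add_bit_eq_xor[simp del] mult_bit_eq_and[simp del]
  \<comment> \<open>keep \<open>+\<close> and \<open>*\<close> on \<open>bit\<close> as field operations rather than XOR and AND\<close>

section \<open>Power series over GF(2)\<close>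

lemma bit_add_self [simp]: "(a::bit) + a = 0"
  by (cases a) simp_all

lemma bit_mult_self [simp]: "(a::bit) * a = a"
  by (cases a) simp_all

lemma sum_bit_eq_sum_fixpoints:
  fixes g :: "'a \<Rightarrow> bit"
  assumes "finite S"
    and "\<And>x. x \<in> S \<Longrightarrow> \<sigma> x \<in> S" "\<And>x. x \<in> S \<Longrightarrow> \<sigma> (\<sigma> x) = x"
    and "\<And>x. x \<in> S \<Longrightarrow> g (\<sigma> x) = g x"
  shows "(\<Sum>x\<in>S. g x) = (\<Sum>x\<in>{x\<in>S. \<sigma> x = x}. g x)"
proof -
  have "(\<Sum>x\<in>S - {x. \<sigma> x = x}. g x) = 0"
    by (rule sum_involution_eq_0[where h = \<sigma>]) (use assms in auto)
  moreover have "{x\<in>S. \<sigma> x = x} = S \<inter> {x. \<sigma> x = x}" by blast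
  ultimately show ?thesis
    using sum.Int_Diff[OF assms(1), of g "{x. \<sigma> x = x}"] by simp
qed

lemma fps_compose_X_power_nth:
  fixes f :: "'a::comm_ring_1 fps"
  assumes "k > 0"
  shows "(f oo fps_X ^ k) $ n = (if k dvd n then f $ (n div k) else 0)"
proof -
  have "(f oo fps_X ^ k) $ n = (\<Sum>i=0..n. if i = n div k \<and> k dvd n then f $ i else 0)"
    unfolding fps_compose_nth power_mult[symmetric] fps_X_power_nth
    by (intro sum.cong refl) (use assms in auto)
  also have "\<dots> = (if k dvd n then f $ (n div k) else 0)"
    using assms by (cases "k dvd n") (auto simp: dvd_def)
  finally show ?thesis .
qed

lemma fps_compose_X_power_X_power:
  fixes f :: "'a::idom fps"
  assumes "a > 0" "b > 0"
  shows "(f oo fps_X ^ a) oo fps_X ^ b = f oo fps_X ^ (a * b)"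
proof -
  have "f oo (fps_X ^ a oo fps_X ^ b) = (f oo fps_X ^ a) oo fps_X ^ b"
    by (rule fps_compose_assoc) (use assms in auto)
  moreover have "fps_X ^ a oo fps_X ^ b = (fps_X ^ (a * b) :: 'a fps)"
    using assms by (simp add: fps_X_power_compose power_mult[symmetric] mult.commute)
  ultimately show ?thesis by simp
qed

text \<open>The Frobenius endomorphism: the cross terms of \<open>f\<^sup>2\<close> cancel in pairs \<open>i \<leftrightarrow> n - i\<close>.\<close>

lemma bit_fps_square: "(f::bit fps) ^ 2 = f oo fps_X ^ 2"
proof (rule fps_ext)
  fix n
  have "(f ^ 2) $ n = (\<Sum>i\<in>{0..n}. f $ i * f $ (n - i))"
    by (simp add: power2_eq_square fps_mult_nth)
  also have "\<dots> = (\<Sum>i\<in>{i\<in>{0..n}. n - i = i}. f $ i * f $ (n - i))"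
    by (rule sum_bit_eq_sum_fixpoints[where \<sigma> = "\<lambda>i. n - i"]) (auto simp: mult.commute)
  also have "\<dots> = (f oo fps_X ^ 2) $ n"
  proof (cases "even n")
    case True
    then obtain m where "n = 2 * m" by (elim evenE)
    then have "{i\<in>{0..n}. n - i = i} = {m}" by auto
    then show ?thesis using \<open>n = 2 * m\<close> by (simp add: fps_compose_X_power_nth)
  next
    case False
    then have "{i\<in>{0..n}. n - i = i} = {}" by (auto; presburger)
    then show ?thesis using False by (simp only:) (simp add: fps_compose_X_power_nth)
  qed
  finally show "(f ^ 2) $ n = (f oo fps_X ^ 2) $ n" .
qed

lemma bit_fps_power4: "(f::bit fps) ^ 4 = f oo fps_X ^ 4"
proof -
  have "f ^ 4 = (f ^ 2) ^ 2" by (simp flip: power_mult)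
  also have "\<dots> = (f oo fps_X ^ 2) oo fps_X ^ 2"
    by (subst bit_fps_square[of "f ^ 2"]) (subst bit_fps_square[of f], rule refl)
  also have "\<dots> = f oo fps_X ^ 4" by (simp add: fps_compose_X_power_X_power)
  finally show ?thesis .
qed

definition fps_agree :: "nat \<Rightarrow> 'a fps \<Rightarrow> 'a fps \<Rightarrow> bool" where
  "fps_agree m f g \<longleftrightarrow> (\<forall>i<m. f $ i = g $ i)"

lemma fps_agree_refl [simp]: "fps_agree m f f"
  by (simp add: fps_agree_def)

lemma fps_agree_sym: "fps_agree m f g \<Longrightarrow> fps_agree m g f"
  by (simp add: fps_agree_def)

lemma fps_agree_trans: "fps_agree m f g \<Longrightarrow> fps_agree m g h \<Longrightarrow> fps_agree m f h"
  by (simp add: fps_agree_def)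

lemma fps_agree_mono: "fps_agree m f g \<Longrightarrow> m' \<le> m \<Longrightarrow> fps_agree m' f g"
  by (simp add: fps_agree_def)

lemma fps_agreeD: "fps_agree m f g \<Longrightarrow> i < m \<Longrightarrow> f $ i = g $ i"
  by (simp add: fps_agree_def)

lemma fps_agree_mult:
  fixes f :: "'a::comm_ring_1 fps"
  assumes "fps_agree m f f'" "fps_agree m g g'"
  shows "fps_agree m (f * g) (f' * g')"
  unfolding fps_agree_def fps_mult_nth
  using assms by (auto simp: fps_agree_def intro!: sum.cong)

lemma fps_agree_power:
  fixes f :: "'a::comm_ring_1 fps"
  shows "fps_agree m f f' \<Longrightarrow> fps_agree m (f ^ k) (f' ^ k)"
  by (induction k) (auto intro: fps_agree_mult)

lemma fps_agree_prod:
  fixes f :: "'b \<Rightarrow> 'a::comm_ring_1 fps"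
  shows "(\<And>j. j \<in> A \<Longrightarrow> fps_agree m (f j) (g j)) \<Longrightarrow> fps_agree m (\<Prod>j\<in>A. f j) (\<Prod>j\<in>A. g j)"
  by (induction A rule: infinite_finite_induct) (auto intro: fps_agree_mult)

lemma fps_agree_sum:
  fixes f :: "'b \<Rightarrow> 'a::comm_ring_1 fps"
  shows "(\<And>j. j \<in> A \<Longrightarrow> fps_agree m (f j) (g j)) \<Longrightarrow> fps_agree m (\<Sum>j\<in>A. f j) (\<Sum>j\<in>A. g j)"
  by (simp add: fps_agree_def fps_sum_nth)

lemma fps_agree_X_power_mult:
  fixes f :: "'a::comm_ring_1 fps"
  shows "fps_agree m f g \<Longrightarrow> fps_agree (m + e) (fps_X ^ e * f) (fps_X ^ e * g)"
  by (auto simp: fps_agree_def fps_X_power_mult_nth)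

lemma fps_agree_1_minus_X_power:
  "m \<le> e \<Longrightarrow> 0 < e \<Longrightarrow> fps_agree m (1 - fps_X ^ e) (1::'a::comm_ring_1 fps)"
  by (auto simp: fps_agree_def fps_X_power_nth)

lemma fps_agree_1_plus_X_power:
  "m \<le> e \<Longrightarrow> 0 < e \<Longrightarrow> fps_agree m (1 + fps_X ^ e) (1::'a::comm_ring_1 fps)"
  by (auto simp: fps_agree_def fps_X_power_nth)

section \<open>The q-Pochhammer symbol\<close>

definition qpoch_trunc :: "nat \<Rightarrow> nat \<Rightarrow> 'a::comm_ring_1 fps" where
  "qpoch_trunc k N = (\<Prod>j\<in>{1..N}. 1 - fps_X ^ (k * j))"

lemma fps_agree_qpoch_trunc:
  assumes "k > 0" "M \<le> N"
  shows "fps_agree (M + 1) (qpoch_trunc k N) (qpoch_trunc k M :: 'a::comm_ring_1 fps)"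
proof -
  have "{1..N} = {1..M} \<union> {M+1..N}" using assms by auto
  then have "qpoch_trunc k N = qpoch_trunc k M * (\<Prod>j\<in>{M+1..N}. 1 - fps_X ^ (k * j) :: 'a fps)"
    unfolding qpoch_trunc_def by (subst prod.union_disjoint[symmetric]) auto
  moreover have "fps_agree (M + 1) (\<Prod>j\<in>{M+1..N}. 1 - fps_X ^ (k * j) :: 'a fps) (\<Prod>j\<in>{M+1..N}. 1)"
  proof (rule fps_agree_prod)
    fix j assume j: "j \<in> {M+1..N}"
    have "j \<le> k * j" using assms(1) by simp
    then have "M + 1 \<le> k * j" using j by (simp only: atLeastAtMost_iff) linarith
    moreover have "0 < k * j" using j assms(1) by simp
    ultimately show "fps_agree (M + 1) (1 - fps_X ^ (k * j)) (1 :: 'a fps)"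
      by (rule fps_agree_1_minus_X_power)
  qed
  ultimately show ?thesis
    using fps_agree_mult[of "M + 1" "qpoch_trunc k M" "qpoch_trunc k M"] by fastforce
qed

lemma fps_agree_qpoch:
  assumes "k > 0"
  shows "fps_agree (N + 1) (qpoch k) (qpoch_trunc k N)"
  unfolding fps_agree_def
proof (intro allI impI)
  fix i assume "i < N + 1"
  then have "qpoch_trunc k N $ i = (qpoch_trunc k i :: rat fps) $ i"
    using fps_agreeD[OF fps_agree_qpoch_trunc[OF assms, of i N], of i] by simp
  then show "qpoch k $ i = qpoch_trunc k N $ i"
    by (simp add: qpoch_def qpoch_trunc_def)
qed

lemma qpoch_nth_0 [simp]: "qpoch k $ 0 = 1"
  by (simp add: qpoch_def)

lemma qpoch_eq_compose:
  assumes "k > 0"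
  shows "qpoch k = qpoch 1 oo fps_X ^ k"
proof (rule fps_ext)
  fix n
  have "(qpoch 1 oo fps_X ^ k) $ n = (qpoch_trunc 1 n oo fps_X ^ k) $ n"
    using fps_agreeD[OF fps_agree_qpoch[of 1 n], of "n div k"] assms
    by (simp add: fps_compose_X_power_nth div_le_dividend le_imp_less_Suc)
  also have "qpoch_trunc 1 n oo fps_X ^ k = (qpoch_trunc k n :: rat fps)"
    unfolding qpoch_trunc_def using assms
    by (simp add: fps_compose_prod_distrib fps_compose_sub_distrib fps_X_power_compose
        power_mult[symmetric] mult.commute)
  also have "qpoch_trunc k n $ n = qpoch k $ n"
    using fps_agreeD[OF fps_agree_qpoch[OF assms, of n], of n] by simp
  finally show "qpoch k $ n = (qpoch 1 oo fps_X ^ k) $ n" by simp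
qed

section \<open>Reduction of integral series modulo 2\<close>

definition integral_fps :: "rat fps \<Rightarrow> bool" where
  "integral_fps f \<longleftrightarrow> (\<forall>n. f $ n \<in> \<int>)"

text \<open>\<open>fps_mod2\<close> is only meaningful on integral series; the floor merely makes it total.\<close>

definition fps_mod2 :: "rat fps \<Rightarrow> bit fps" where
  "fps_mod2 f = Abs_fps (\<lambda>n. of_int \<lfloor>f $ n\<rfloor>)"

lemma fps_mod2_nth: "fps_mod2 f $ n = of_int \<lfloor>f $ n\<rfloor>"
  by (simp add: fps_mod2_def)

lemma integral_fps_nth: "integral_fps f \<Longrightarrow> f $ n = of_int \<lfloor>f $ n\<rfloor>"
  by (auto simp: integral_fps_def elim!: Ints_cases)

lemma integral_fps_mult: "integral_fps f \<Longrightarrow> integral_fps g \<Longrightarrow> integral_fps (f * g)"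
  unfolding integral_fps_def fps_mult_nth by (intro allI Ints_sum Ints_mult) auto

lemma integral_fps_add: "integral_fps f \<Longrightarrow> integral_fps g \<Longrightarrow> integral_fps (f + g)"
  by (auto simp: integral_fps_def)

lemma integral_fps_diff: "integral_fps f \<Longrightarrow> integral_fps g \<Longrightarrow> integral_fps (f - g)"
  by (auto simp: integral_fps_def)

lemma integral_fps_1: "integral_fps 1"
  by (auto simp: integral_fps_def fps_one_nth)

lemma integral_fps_X_power: "integral_fps (fps_X ^ k)"
  by (auto simp: integral_fps_def fps_X_power_nth)

lemma integral_fps_power: "integral_fps f \<Longrightarrow> integral_fps (f ^ k)"
  by (induction k) (auto intro: integral_fps_mult integral_fps_1)

lemma integral_fps_prod:
  "(\<And>j. j \<in> A \<Longrightarrow> integral_fps (f j)) \<Longrightarrow> integral_fps (\<Prod>j\<in>A. f j)"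
  by (induction A rule: infinite_finite_induct) (auto intro: integral_fps_mult integral_fps_1)

lemma integral_fps_inverse:
  assumes f: "integral_fps f" and f0: "f $ 0 = 1"
  shows "integral_fps (inverse f)"
  unfolding integral_fps_def
proof
  fix n
  have gf: "inverse f * f = 1" using f0 by (intro inverse_mult_eq_1) simp
  show "inverse f $ n \<in> \<int>"
  proof (induction n rule: less_induct)
    case (less n)
    show ?case
    proof (cases n)
      case 0
      then show ?thesis using f0 by simp
    next
      case (Suc m)
      have "0 = (inverse f * f) $ n" using gf Suc by (simp add: fps_one_nth)
      also have "\<dots> = (\<Sum>i=0..m. inverse f $ i * f $ (n - i)) + inverse f $ n"
        unfolding fps_mult_nth Suc using f0 by (simp add: sum.atLeast0_atMost_Suc)
      finally have "inverse f $ n = - (\<Sum>i=0..m. inverse f $ i * f $ (n - i))"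
        by (simp add: eq_neg_iff_add_eq_0 add.commute)
      moreover have "(\<Sum>i=0..m. inverse f $ i * f $ (n - i)) \<in> \<int>"
        using less Suc f unfolding integral_fps_def by (intro Ints_sum Ints_mult) auto
      ultimately show ?thesis by simp
    qed
  qed
qed

lemma integral_fps_qpoch: "integral_fps (qpoch k)"
  unfolding qpoch_def integral_fps_def
  using integral_fps_prod[of "{1..n}" "\<lambda>j. 1 - fps_X ^ (k * j)" for n]
  by (auto simp: integral_fps_def intro: integral_fps_diff integral_fps_1 integral_fps_X_power)

lemma fps_mod2_mult:
  assumes "integral_fps f" "integral_fps g"
  shows "fps_mod2 (f * g) = fps_mod2 f * fps_mod2 g"
proof (rule fps_ext)
  fix n
  have "(f * g) $ n = (\<Sum>i=0..n. of_int \<lfloor>f $ i\<rfloor> * of_int \<lfloor>g $ (n - i)\<rfloor>)"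
    unfolding fps_mult_nth using integral_fps_nth[OF assms(1)] integral_fps_nth[OF assms(2)]
    by (intro sum.cong refl) metis
  then have "(f * g) $ n = of_int (\<Sum>i=0..n. \<lfloor>f $ i\<rfloor> * \<lfloor>g $ (n - i)\<rfloor>)"
    by simp
  then show "fps_mod2 (f * g) $ n = (fps_mod2 f * fps_mod2 g) $ n"
    by (simp only: fps_mod2_nth floor_of_int) (simp add: fps_mult_nth fps_mod2_nth)
qed

lemma fps_mod2_add:
  assumes "integral_fps f" "integral_fps g"
  shows "fps_mod2 (f + g) = fps_mod2 f + fps_mod2 g"
proof (rule fps_ext)
  fix n
  have "(f + g) $ n = of_int (\<lfloor>f $ n\<rfloor> + \<lfloor>g $ n\<rfloor>)"
    using integral_fps_nth[OF assms(1), of n] integral_fps_nth[OF assms(2), of n] by simp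
  then show "fps_mod2 (f + g) $ n = (fps_mod2 f + fps_mod2 g) $ n"
    by (simp only: fps_mod2_nth floor_of_int) (simp add: fps_mod2_nth)
qed

lemma fps_mod2_diff:
  assumes "integral_fps f" "integral_fps g"
  shows "fps_mod2 (f - g) = fps_mod2 f - fps_mod2 g"
proof (rule fps_ext)
  fix n
  have "(f - g) $ n = of_int (\<lfloor>f $ n\<rfloor> - \<lfloor>g $ n\<rfloor>)"
    using integral_fps_nth[OF assms(1), of n] integral_fps_nth[OF assms(2), of n] by simp
  then show "fps_mod2 (f - g) $ n = (fps_mod2 f - fps_mod2 g) $ n"
    by (simp only: fps_mod2_nth floor_of_int) (simp add: fps_mod2_nth)
qed

lemma fps_mod2_1 [simp]: "fps_mod2 1 = 1"
  by (rule fps_ext) (simp add: fps_mod2_nth fps_one_nth)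

lemma fps_mod2_X_power [simp]: "fps_mod2 (fps_X ^ k) = fps_X ^ k"
  by (rule fps_ext) (simp add: fps_mod2_nth fps_X_power_nth)

lemma fps_mod2_power: "integral_fps f \<Longrightarrow> fps_mod2 (f ^ k) = fps_mod2 f ^ k"
  by (induction k) (simp_all add: fps_mod2_mult integral_fps_power)

lemma fps_mod2_prod:
  "(\<And>j. j \<in> A \<Longrightarrow> integral_fps (f j)) \<Longrightarrow> fps_mod2 (\<Prod>j\<in>A. f j) = (\<Prod>j\<in>A. fps_mod2 (f j))"
  by (induction A rule: infinite_finite_induct) (simp_all add: fps_mod2_mult integral_fps_prod)

lemma fps_mod2_compose_X_power: "k > 0 \<Longrightarrow> fps_mod2 (f oo fps_X ^ k) = fps_mod2 f oo fps_X ^ k"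
  by (rule fps_ext) (simp add: fps_mod2_nth fps_compose_X_power_nth)

lemma fps_agree_fps_mod2: "fps_agree m f g \<Longrightarrow> fps_agree m (fps_mod2 f) (fps_mod2 g)"
  by (simp add: fps_agree_def fps_mod2_nth)

lemma fps_mod2_inverse:
  assumes f: "integral_fps f" and f0: "f $ 0 = 1"
  shows "fps_mod2 (inverse f) = inverse (fps_mod2 f)"
proof -
  have "fps_mod2 f * fps_mod2 (inverse f) = fps_mod2 (f * inverse f)"
    by (simp add: fps_mod2_mult f integral_fps_inverse f0)
  also have "f * inverse f = 1" using f0 by (intro inverse_mult_eq_1') simp
  finally have "fps_mod2 f * fps_mod2 (inverse f) = 1" by simp
  then show ?thesis by (rule fps_inverse_unique[symmetric])
qed

lemma fps_mod2_qpoch: "k > 0 \<Longrightarrow> fps_mod2 (qpoch k) = fps_mod2 (qpoch 1) oo fps_X ^ k"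
  by (subst qpoch_eq_compose) (simp_all add: fps_mod2_compose_X_power)

section \<open>Ramanujan's \<open>\<psi>\<close> modulo 2\<close>

text \<open>\<open>triangular n\<close> encodes \<open>n = m(m+1)/2\<close> as \<open>8n + 1 = (2m+1)\<^sup>2\<close>.\<close>

definition triangular :: "nat \<Rightarrow> bool" where
  "triangular n \<longleftrightarrow> (\<exists>x::nat. x ^ 2 = 8 * n + 1)"

definition psi_mod2 :: "bit fps" where
  "psi_mod2 = Abs_fps (\<lambda>n. if triangular n then 1 else 0)"

lemma psi_mod2_nth: "psi_mod2 $ n = (if triangular n then 1 else 0)"
  by (simp add: psi_mod2_def)

lemma psi_mod2_nth_0 [simp]: "psi_mod2 $ 0 = 1"
  by (auto simp: psi_mod2_nth triangular_def intro: exI[of _ 1])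

lemma triangular_iff_int: "triangular n \<longleftrightarrow> (\<exists>x::int. 0 < x \<and> x ^ 2 = 8 * int n + 1)"
proof
  assume "triangular n"
  then obtain z :: nat where z: "z ^ 2 = 8 * n + 1" by (auto simp: triangular_def)
  then have "int z ^ 2 = 8 * int n + 1" by (metis of_nat_add of_nat_mult of_nat_numeral of_nat_1 of_nat_power)
  moreover have "z > 0" using z by (cases z) auto
  ultimately show "\<exists>x::int. 0 < x \<and> x ^ 2 = 8 * int n + 1" by (intro exI[of _ "int z"]) simp
next
  assume "\<exists>x::int. 0 < x \<and> x ^ 2 = 8 * int n + 1"
  then obtain x :: int where x: "0 < x" "x ^ 2 = 8 * int n + 1" by blast
  then have "int (nat x ^ 2) = int (8 * n + 1)" by simp
  then have "nat x ^ 2 = 8 * n + 1" by (simp only: of_nat_eq_iff)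
  then show "triangular n" unfolding triangular_def by (rule exI)
qed

lemma odd_of_square_eq:
  assumes "(x::int) ^ 2 = 8 * b + 1"
  shows "odd x"
proof
  assume "even x"
  then have "even (x ^ 2)" by simp
  then show False using assms by simp
qed

section \<open>Jacobi's identity modulo 2\<close>

fun qbinom :: "nat \<Rightarrow> nat \<Rightarrow> rat fps" where
  "qbinom 0 k = (if k = 0 then 1 else 0)"
| "qbinom (Suc N) k = (if k = 0 then 1 else qbinom N (k - 1) + fps_X ^ k * qbinom N k)"

lemma qbinom_0_right [simp]: "qbinom N 0 = 1"
  by (cases N) simp_all

lemma qbinom_eq_0: "N < k \<Longrightarrow> qbinom N k = 0"
  by (induction N arbitrary: k) simp_all

lemma qbinom_self: "qbinom N N = 1"
  by (induction N) (simp_all add: qbinom_eq_0)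

definition qfact :: "nat \<Rightarrow> rat fps" where
  "qfact r = (\<Prod>j\<in>{1..r}. 1 - fps_X ^ j)"

lemma qpoch_trunc_1_eq_qfact: "qpoch_trunc 1 r = qfact r" "qpoch_trunc (Suc 0) r = qfact r"
  by (simp_all add: qpoch_trunc_def qfact_def)

lemma qfact_0 [simp]: "qfact 0 = 1"
  by (simp add: qfact_def)

lemma qfact_Suc: "qfact (Suc r) = qfact r * (1 - fps_X ^ Suc r)"
  by (simp add: qfact_def mult.commute)

lemma qfact_nth_0: "qfact r $ 0 = 1"
  using fps_agreeD[OF fps_agree_qpoch[of 1 r], of 0] by (simp add: qpoch_trunc_1_eq_qfact)

lemma qfact_nonzero: "qfact r \<noteq> 0"
  using qfact_nth_0[of r] by auto

lemma qbinom_mult_qfact_Suc: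
  assumes "k \<le> N" "qbinom N k * qfact k * qfact (N - k) = qfact N"
  shows "qbinom N k * qfact k * qfact (Suc N - k) = qfact N * (1 - fps_X ^ (Suc N - k))"
    and "qbinom N k * qfact (Suc k) * qfact (N - k) = qfact N * (1 - fps_X ^ Suc k)"
  using assms by (simp_all add: Suc_diff_le qfact_Suc mult_ac)

lemma qbinom_mult_qfact: "k \<le> N \<Longrightarrow> qbinom N k * qfact k * qfact (N - k) = qfact N"
proof (induction N arbitrary: k)
  case (Suc N)
  consider "k = 0" | "k = Suc N" | (inner) k' where "k = Suc k'" "k' < N"
    using Suc.prems by (cases k; cases "k = Suc N") auto
  then show ?case
  proof cases
    case inner
    have A: "qbinom N k' * qfact k * qfact (Suc N - k) = qfact N * (1 - fps_X ^ k)"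
      using qbinom_mult_qfact_Suc(2)[OF _ Suc.IH, of k'] inner by simp
    have B: "qbinom N k * qfact k * qfact (Suc N - k) = qfact N * (1 - fps_X ^ (Suc N - k))"
      using qbinom_mult_qfact_Suc(1)[OF _ Suc.IH, of k] inner by simp
    have "qbinom (Suc N) k * qfact k * qfact (Suc N - k)
        = qbinom N k' * qfact k * qfact (Suc N - k)
          + fps_X ^ k * (qbinom N k * qfact k * qfact (Suc N - k))"
      using inner by (simp add: algebra_simps)
    also have "\<dots> = qfact N * (1 - fps_X ^ k * fps_X ^ (Suc N - k))"
      unfolding A B by (simp add: algebra_simps)
    also have "fps_X ^ k * fps_X ^ (Suc N - k) = (fps_X ^ Suc N :: rat fps)"
      using inner by (simp flip: power_add)
    finally show ?thesis by (simp add: qfact_Suc)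
  qed (simp_all add: qbinom_self)
qed simp

lemma qbinom_Suc_right:
  assumes "1 \<le> k" "k \<le> Suc N"
  shows "qbinom (Suc N) k = qbinom N k + fps_X ^ (Suc N - k) * qbinom N (k - 1)"
proof (cases "k = Suc N")
  case True
  then show ?thesis by (simp add: qbinom_eq_0 qbinom_self)
next
  case False
  then obtain k' where k': "k = Suc k'" "k' < N" using assms by (cases k) auto
  define c where "c = qfact k * qfact (Suc N - k)"
  have A: "qbinom N k' * c = qfact N * (1 - fps_X ^ k)"
    using qbinom_mult_qfact_Suc(2)[OF _ qbinom_mult_qfact, of k' N] k'
    by (simp add: c_def mult.assoc)
  have B: "qbinom N k * c = qfact N * (1 - fps_X ^ (Suc N - k))"
    using qbinom_mult_qfact_Suc(1)[OF _ qbinom_mult_qfact, of k N] k'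
    by (simp add: c_def mult.assoc)
  have "(qbinom N k + fps_X ^ (Suc N - k) * qbinom N (k - 1)) * c
      = qbinom N k * c + fps_X ^ (Suc N - k) * (qbinom N k' * c)"
    using k' by (simp add: algebra_simps)
  also have "\<dots> = qfact N * (1 - fps_X ^ (Suc N - k) * fps_X ^ k)"
    unfolding A B by (simp add: algebra_simps)
  also have "fps_X ^ (Suc N - k) * fps_X ^ k = (fps_X ^ Suc N :: rat fps)"
    using k' by (simp flip: power_add)
  also have "qfact N * (1 - fps_X ^ Suc N) = qbinom (Suc N) k * c"
    using qbinom_mult_qfact[OF assms(2)] by (simp add: c_def qfact_Suc mult.assoc)
  finally show ?thesis
    by (simp add: c_def qfact_nonzero)
qed

definition tri_num :: "int \<Rightarrow> nat" where
  "tri_num m = nat (m * (m - 1) div 2)"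

lemma double_tri_num: "2 * int (tri_num m) = m * (m - 1)"
proof -
  have "0 \<le> m * (m - 1)" by (cases "m \<le> 0") (simp_all add: mult_nonpos_nonpos)
  then show ?thesis by (simp add: tri_num_def)
qed

lemma tri_num_plus_1: "int (tri_num (m + 1)) = int (tri_num m) + m"
  using double_tri_num[of m] double_tri_num[of "m + 1"] by (simp add: algebra_simps)

lemma tri_num_square: "8 * int (tri_num m) + 1 = (2 * m - 1) ^ 2"
  using double_tri_num[of m] by (simp add: power2_eq_square algebra_simps)

text \<open>Both sides of the finite triple product
  \<open>\<Prod>\<^sub>j\<^sub><\<^sub>N (1 + q\<^bsup>|j-a|\<^esup>) = \<Sum>\<^sub>k [N, k] q\<^bsup>T(k-a)\<^esup>\<close>, \<open>T(m) = m(m-1)/2\<close>, satisfy the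
  same recurrences in \<open>N\<close>.\<close>

definition jtp_prod :: "nat \<Rightarrow> nat \<Rightarrow> rat fps" where
  "jtp_prod N a = (\<Prod>j<N. 1 + fps_X ^ nat \<bar>int j - int a\<bar>)"

definition jtp_sum :: "nat \<Rightarrow> nat \<Rightarrow> rat fps" where
  "jtp_sum N a = (\<Sum>k=0..N. qbinom N k * fps_X ^ tri_num (int k - int a))"

lemma jtp_prod_Suc_Suc: "jtp_prod (Suc N) (Suc N) = (1 + fps_X ^ Suc N) * jtp_prod N N"
proof -
  have "jtp_prod (Suc N) (Suc N) = (1 + fps_X ^ nat \<bar>int 0 - int (Suc N)\<bar>)
      * (\<Prod>i<N. 1 + fps_X ^ nat \<bar>int (Suc i) - int (Suc N)\<bar>)"
    unfolding jtp_prod_def by (rule prod.lessThan_Suc_shift)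
  also have "(\<Prod>i<N. 1 + fps_X ^ nat \<bar>int (Suc i) - int (Suc N)\<bar>) = jtp_prod N N"
    unfolding jtp_prod_def by (intro prod.cong refl arg_cong[where f = "\<lambda>t. 1 + fps_X ^ nat \<bar>t\<bar>"]) simp
  also have "nat \<bar>int 0 - int (Suc N)\<bar> = Suc N" by simp
  finally show ?thesis .
qed

lemma jtp_sum_Suc_Suc: "jtp_sum (Suc N) (Suc N) = (1 + fps_X ^ Suc N) * jtp_sum N N"
proof -
  define S where "S = (\<Sum>k=0..N. fps_X ^ (Suc k + tri_num (int k - int N)) * qbinom N (Suc k))"
  have T: "tri_num (- int (Suc N)) = Suc N + tri_num (- int N)"
    "Suc N + tri_num (int (Suc k) - int N) = Suc k + tri_num (int k - int N)" for k
    using tri_num_plus_1[of "- int (Suc N)"] tri_num_plus_1[of "int k - int N"]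
    by (simp_all add: algebra_simps)
  have "jtp_sum (Suc N) (Suc N) = fps_X ^ tri_num (- int (Suc N))
      + (\<Sum>k=0..N. qbinom (Suc N) (Suc k) * fps_X ^ tri_num (int k - int N))"
    unfolding jtp_sum_def by (subst sum.atLeast0_atMost_Suc_shift) simp
  also have "(\<Sum>k=0..N. qbinom (Suc N) (Suc k) * fps_X ^ tri_num (int k - int N)) = jtp_sum N N + S"
  proof -
    have "qbinom (Suc N) (Suc k) * fps_X ^ tri_num (int k - int N) = qbinom N k * fps_X ^ tri_num (int k - int N)
        + fps_X ^ (Suc k + tri_num (int k - int N)) * qbinom N (Suc k)" for k
      by (simp only: qbinom.simps nat.distinct if_False diff_Suc_1 power_add distrib_right distrib_left mult_ac)
    then show ?thesis unfolding jtp_sum_def S_def by (simp only: sum.distrib)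
  qed
  also have "fps_X ^ tri_num (- int (Suc N)) + (jtp_sum N N + S)
      = jtp_sum N N + (fps_X ^ tri_num (- int (Suc N)) + S)"
    by (simp only: ac_simps)
  also have "fps_X ^ tri_num (- int (Suc N)) + S = fps_X ^ Suc N * jtp_sum N N"
  proof -
    have "fps_X ^ Suc N * jtp_sum N N
        = (\<Sum>k=0..Suc N. fps_X ^ (Suc N + tri_num (int k - int N)) * qbinom N k)"
      unfolding jtp_sum_def by (simp add: sum_distrib_left power_add mult_ac qbinom_eq_0)
    also have "\<dots> = fps_X ^ (Suc N + tri_num (- int N))
        + (\<Sum>k=0..N. fps_X ^ (Suc N + tri_num (int (Suc k) - int N)) * qbinom N (Suc k))"
      by (subst sum.atLeast0_atMost_Suc_shift) simp
    finally show ?thesis by (simp only: T S_def)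
  qed
  finally show ?thesis by (simp add: algebra_simps)
qed

lemma jtp_prod_Suc: "a \<le> N \<Longrightarrow> jtp_prod (Suc N) a = (1 + fps_X ^ (N - a)) * jtp_prod N a"
  unfolding jtp_prod_def by (simp add: nat_diff_distrib mult.commute)

lemma jtp_sum_Suc:
  assumes "a \<le> N"
  shows "jtp_sum (Suc N) a = (1 + fps_X ^ (N - a)) * jtp_sum N a"
proof -
  define S where "S = (\<Sum>k=0..N. qbinom N (Suc k) * fps_X ^ tri_num (int (Suc k) - int a))"
  have T: "fps_X ^ (N - k) * fps_X ^ tri_num (int (Suc k) - int a)
      = (fps_X ^ (N - a) * fps_X ^ tri_num (int k - int a) :: rat fps)" if "k \<le> N" for k
  proof -
    have "int (tri_num (int (Suc k) - int a)) = int (tri_num (int k - int a)) + (int k - int a)"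
      using tri_num_plus_1[of "int k - int a"] by (simp add: algebra_simps)
    then have "N - k + tri_num (int (Suc k) - int a) = N - a + tri_num (int k - int a)"
      using that assms by linarith
    then show ?thesis by (simp flip: power_add)
  qed
  have "jtp_sum (Suc N) a = fps_X ^ tri_num (- int a)
      + (\<Sum>k=0..N. qbinom (Suc N) (Suc k) * fps_X ^ tri_num (int (Suc k) - int a))"
    unfolding jtp_sum_def by (subst sum.atLeast0_atMost_Suc_shift) simp
  also have "(\<Sum>k=0..N. qbinom (Suc N) (Suc k) * fps_X ^ tri_num (int (Suc k) - int a))
      = fps_X ^ (N - a) * jtp_sum N a + S"
  proof -
    have "qbinom (Suc N) (Suc k) * fps_X ^ tri_num (int (Suc k) - int a)
        = qbinom N (Suc k) * fps_X ^ tri_num (int (Suc k) - int a)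
          + fps_X ^ (N - a) * (qbinom N k * fps_X ^ tri_num (int k - int a))" if "k \<le> N" for k
      using qbinom_Suc_right[of "Suc k" N] T[OF that] that by (simp add: algebra_simps)
    then show ?thesis by (simp add: S_def jtp_sum_def sum.distrib sum_distrib_left add.commute)
  qed
  also have "fps_X ^ tri_num (- int a) + (fps_X ^ (N - a) * jtp_sum N a + S)
      = fps_X ^ (N - a) * jtp_sum N a + (fps_X ^ tri_num (- int a) + S)"
    by (simp only: ac_simps)
  also have "fps_X ^ tri_num (- int a) + S = jtp_sum N a"
  proof -
    have "jtp_sum N a = (\<Sum>k=0..Suc N. qbinom N k * fps_X ^ tri_num (int k - int a))"
      unfolding jtp_sum_def by (simp add: qbinom_eq_0)
    also have "\<dots> = fps_X ^ tri_num (- int a) + S"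
      unfolding S_def by (subst sum.atLeast0_atMost_Suc_shift) simp
    finally show ?thesis ..
  qed
  finally show ?thesis by (simp add: algebra_simps)
qed

theorem jtp_prod_eq_sum: "a \<le> N \<Longrightarrow> jtp_prod N a = jtp_sum N a"
proof (induction N arbitrary: a)
  case 0
  then show ?case by (simp add: jtp_prod_def jtp_sum_def tri_num_def)
next
  case (Suc N)
  show ?case
  proof (cases "a = Suc N")
    case True
    then show ?thesis using Suc.IH[of N] by (simp add: jtp_prod_Suc_Suc jtp_sum_Suc_Suc)
  next
    case False
    then show ?thesis using Suc by (simp add: jtp_prod_Suc jtp_sum_Suc)
  qed
qed

lemma fps_agree_qfact: "fps_agree (r + 1) (qfact r) (qpoch 1)"
  using fps_agree_qpoch[of 1 r] by (simp add: qpoch_trunc_1_eq_qfact fps_agree_sym)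

lemma fps_agree_qbinom_mult_qpoch:
  assumes "k \<le> N"
  shows "fps_agree (min k (N - k) + 1) (qbinom N k * qpoch 1) 1"
proof -
  let ?m = "min k (N - k) + 1"
  have a: "fps_agree ?m (qfact k) (qpoch 1)" "fps_agree ?m (qfact (N - k)) (qpoch 1)"
    "fps_agree ?m (qfact N) (qpoch 1)"
    by (rule fps_agree_mono[OF fps_agree_qfact], simp)+
  have "fps_agree ?m (qbinom N k * qfact k * qfact (N - k)) (qbinom N k * qpoch 1 * qpoch 1)"
    by (intro fps_agree_mult fps_agree_refl a)
  then have "fps_agree ?m (qbinom N k * qpoch 1 * qpoch 1) (qpoch 1)"
    using qbinom_mult_qfact[OF assms] a(3) by (metis fps_agree_sym fps_agree_trans)
  then have "fps_agree ?m (qbinom N k * qpoch 1 * qpoch 1 * inverse (qpoch 1)) (qpoch 1 * inverse (qpoch 1))"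
    by (intro fps_agree_mult fps_agree_refl)
  moreover have "qpoch 1 * inverse (qpoch 1) = 1" by (rule inverse_mult_eq_1') simp
  ultimately show ?thesis by (simp add: mult.assoc)
qed

lemma tri_num_lower_bound:
  assumes "k \<le> 2 * n"
  shows "n \<le> tri_num (int k - int n) + min k (2 * n - k) + 1"
proof -
  define m where "m = int k - int n"
  have "m * (m - 1) + 2 \<ge> 2 * \<bar>m\<bar>"
  proof (cases "m \<ge> 0")
    case True
    have "(m - 1) * (m - 2) \<ge> 0"
      by (cases "m \<le> 1") (simp_all add: mult_nonpos_nonpos)
    then show ?thesis using True by (simp add: algebra_simps)
  next
    case False
    have "0 \<le> m * (m + 1)" using False by (intro mult_nonpos_nonpos) auto
    then show ?thesis using False by (simp add: algebra_simps)
  qed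
  then have "int (tri_num m) + 1 \<ge> \<bar>m\<bar>" using double_tri_num[of m] by linarith
  moreover have "int (min k (2 * n - k)) = int n - \<bar>m\<bar>" using assms unfolding m_def by auto
  ultimately show ?thesis unfolding m_def by linarith
qed

lemma fps_sum_X_power_nth:
  assumes "finite A"
  shows "(\<Sum>k\<in>A. fps_X ^ e k :: rat fps) $ d = of_nat (card {k\<in>A. e k = d})"
proof -
  have "(\<Sum>k\<in>A. fps_X ^ e k :: rat fps) $ d = (\<Sum>k\<in>A. if k \<in> {k\<in>A. e k = d} then 1 else 0)"
    by (simp add: fps_sum_nth fps_X_power_nth eq_commute)
  also have "\<dots> = (\<Sum>k\<in>A \<inter> {k\<in>A. e k = d}. 1)"
    by (rule sum.inter_restrict[symmetric]) (rule assms)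
  also have "A \<inter> {k\<in>A. e k = d} = {k\<in>A. e k = d}" by auto
  finally show ?thesis by simp
qed

lemma root_lt_of_triangular_lt:
  assumes "d < n" "0 < w" "w ^ 2 = 8 * int d + 1"
  shows "w < 2 * int n"
proof (rule ccontr)
  assume "\<not> w < 2 * int n"
  then have "(2 * int n) ^ 2 \<le> w ^ 2" by (intro power_mono) simp_all
  moreover have "8 * int d + 1 \<le> 8 * int n - 7" using assms(1) by simp
  moreover have "0 \<le> (2 * int n - 2) ^ 2" by simp
  ultimately show False using assms(3) unfolding power2_eq_square by (simp add: algebra_simps)
qed

text \<open>The two solutions of \<open>T(m) = d\<close> are \<open>m = h\<close> and \<open>m = 1 - h\<close>, where
  \<open>8d + 1 = (2h - 1)\<^sup>2\<close>.\<close>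

lemma card_tri_num_eq:
  assumes "d < n"
  shows "card {k\<in>{0..2 * n}. tri_num (int k - int n) = d} = (if triangular d then 2 else 0)"
proof (cases "triangular d")
  case True
  then obtain w where w: "0 < w" "w ^ 2 = 8 * int d + 1" using triangular_iff_int by blast
  obtain r where "w = 2 * r + 1" using odd_of_square_eq[OF w(2)] by (elim oddE)
  then obtain h where h: "w = 2 * h - 1" by (intro that[of "r + 1"]) simp
  have h1: "1 \<le> h" "h \<le> int n" using h w root_lt_of_triangular_lt[OF assms w] by simp_all
  have eq: "tri_num m = d \<longleftrightarrow> m = h \<or> m = 1 - h" for m
  proof -
    have "tri_num m = d \<longleftrightarrow> 8 * int (tri_num m) + 1 = 8 * int d + 1" by simp
    also have "\<dots> \<longleftrightarrow> (2 * m - 1) ^ 2 = w ^ 2" using tri_num_square[of m] w(2) by simp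
    also have "\<dots> \<longleftrightarrow> 2 * m - 1 = w \<or> 2 * m - 1 = - w" by (simp add: power2_eq_iff)
    also have "\<dots> \<longleftrightarrow> m = h \<or> m = 1 - h" using h by auto
    finally show ?thesis .
  qed
  have "{k\<in>{0..2 * n}. tri_num (int k - int n) = d} = {nat (int n + h), nat (int n + 1 - h)}"
  proof
    show "{k\<in>{0..2 * n}. tri_num (int k - int n) = d} \<subseteq> {nat (int n + h), nat (int n + 1 - h)}"
      using eq by force
    show "{nat (int n + h), nat (int n + 1 - h)} \<subseteq> {k\<in>{0..2 * n}. tri_num (int k - int n) = d}"
      using eq h1 by auto
  qed
  moreover have "nat (int n + h) \<noteq> nat (int n + 1 - h)" using h1 by simp
  ultimately show ?thesis using True by simp
next
  case False
  have "tri_num (int k - int n) \<noteq> d" for k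
  proof
    assume "tri_num (int k - int n) = d"
    then have "\<bar>2 * (int k - int n) - 1\<bar> ^ 2 = 8 * int d + 1"
      using tri_num_square[of "int k - int n"] by simp
    moreover have "0 < \<bar>2 * (int k - int n) - 1\<bar>" by presburger
    ultimately have "triangular d" unfolding triangular_iff_int by blast
    then show False using False by simp
  qed
  then show ?thesis using False by simp
qed

definition qpoch_neg_trunc :: "nat \<Rightarrow> rat fps" where
  "qpoch_neg_trunc n = (\<Prod>i\<in>{1..<n}. 1 + fps_X ^ i)"

lemma jtp_prod_central:
  assumes "1 \<le> n"
  shows "jtp_prod (2 * n) n = fps_const 2 * (1 + fps_X ^ n) * qpoch_neg_trunc n ^ 2"
proof -
  define f where "f j = (1 + fps_X ^ nat \<bar>int j - int n\<bar> :: rat fps)" for j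
  have "jtp_prod (2 * n) n = (\<Prod>j\<in>{..<n} \<union> {n..<2 * n}. f j)"
    unfolding jtp_prod_def f_def by (intro prod.cong refl) auto
  also have "\<dots> = (\<Prod>j\<in>{..<n}. f j) * (\<Prod>j\<in>{n..<2 * n}. f j)"
    by (rule prod.union_disjoint) auto
  also have "(\<Prod>j\<in>{..<n}. f j) = (\<Prod>i\<in>{1..n}. 1 + fps_X ^ i)"
    by (rule prod.reindex_bij_witness[where i = "\<lambda>b. n - b" and j = "\<lambda>a. n - a"]) (auto simp: f_def)
  also have "\<dots> = (\<Prod>i\<in>insert n {1..<n}. 1 + fps_X ^ i)"
    using assms by (intro prod.cong refl) auto
  also have "\<dots> = (1 + fps_X ^ n) * qpoch_neg_trunc n" by (simp add: qpoch_neg_trunc_def)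
  also have "(\<Prod>j\<in>{n..<2 * n}. f j) = (\<Prod>i\<in>{0..<n}. f (i + n))"
    using prod.shift_bounds_nat_ivl[of f 0 n n] by (simp add: mult_2)
  also have "\<dots> = (\<Prod>i\<in>insert 0 {1..<n}. 1 + fps_X ^ i)"
    using assms by (intro prod.cong) (auto simp: f_def)
  also have "\<dots> = fps_const 2 * qpoch_neg_trunc n"
    by (simp add: qpoch_neg_trunc_def numeral_fps_const[symmetric] one_add_one)
  finally show ?thesis by (simp add: power2_eq_square mult_ac)
qed

text \<open>Multiply the triple product for \<open>N = 2n\<close>, \<open>a = n\<close> by \<open>(q;q)\<^sub>\<infinity>\<close>: below degree \<open>n\<close>
  the left side is \<open>2 (-q;q)\<^sup>2\<^sub>n\<^sub>-\<^sub>1 (q;q)\<^sub>\<infinity>\<close>, and every \<open>[2n, k] (q;q)\<^sub>\<infinity>\<close> on the right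
  is \<open>1\<close>.\<close>

lemma qpoch_neg_trunc_square_mult_qpoch_nth:
  assumes "d < n"
  shows "(qpoch_neg_trunc n ^ 2 * qpoch 1) $ d = (if triangular d then 1 else 0)"
proof -
  have n: "1 \<le> n" using assms by simp
  have "fps_agree n (fps_const 2 * (1 + fps_X ^ n) * qpoch_neg_trunc n ^ 2 * qpoch 1)
      (fps_const 2 * 1 * qpoch_neg_trunc n ^ 2 * qpoch 1)"
    using n by (intro fps_agree_mult fps_agree_refl fps_agree_1_plus_X_power) simp_all
  then have L: "fps_agree n (jtp_prod (2 * n) n * qpoch 1) (fps_const 2 * qpoch_neg_trunc n ^ 2 * qpoch 1)"
    by (simp add: jtp_prod_central[OF n])
  have "fps_agree n (\<Sum>k=0..2 * n. fps_X ^ tri_num (int k - int n) * (qbinom (2 * n) k * qpoch 1))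
      (\<Sum>k=0..2 * n. fps_X ^ tri_num (int k - int n) * 1)"
  proof (rule fps_agree_sum)
    fix k assume k: "k \<in> {0..2 * n}"
    then have "fps_agree (min k (2 * n - k) + 1 + tri_num (int k - int n))
        (fps_X ^ tri_num (int k - int n) * (qbinom (2 * n) k * qpoch 1))
        (fps_X ^ tri_num (int k - int n) * 1)"
      by (intro fps_agree_X_power_mult fps_agree_qbinom_mult_qpoch) simp
    then show "fps_agree n (fps_X ^ tri_num (int k - int n) * (qbinom (2 * n) k * qpoch 1))
        (fps_X ^ tri_num (int k - int n) * 1)"
      by (rule fps_agree_mono) (use tri_num_lower_bound[of k n] k in simp)
  qed
  then have R: "fps_agree n (jtp_sum (2 * n) n * qpoch 1) (\<Sum>k=0..2 * n. fps_X ^ tri_num (int k - int n))"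
    unfolding jtp_sum_def sum_distrib_right by (simp add: mult_ac)
  have "(fps_const 2 * qpoch_neg_trunc n ^ 2 * qpoch 1) $ d
      = (\<Sum>k=0..2 * n. fps_X ^ tri_num (int k - int n) :: rat fps) $ d"
    using fps_agreeD[OF L assms] fps_agreeD[OF R assms] jtp_prod_eq_sum[of n "2 * n"] by simp
  also have "\<dots> = of_nat (card {k\<in>{0..2 * n}. tri_num (int k - int n) = d})"
    by (rule fps_sum_X_power_nth) simp
  also have "\<dots> = (if triangular d then 2 else 0)" using card_tri_num_eq[OF assms] by simp
  finally have "2 * (qpoch_neg_trunc n ^ 2 * qpoch 1) $ d = (if triangular d then 2 else 0)"
    by (simp add: mult.assoc)
  then show ?thesis by (auto split: if_splits)
qed

lemma bit_fps_diff_eq_add: "(f::bit fps) - g = f + g"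
  by (rule fps_ext) simp

lemma integral_fps_qpoch_neg_trunc: "integral_fps (qpoch_neg_trunc n)"
  unfolding qpoch_neg_trunc_def
  by (intro integral_fps_prod integral_fps_add integral_fps_1 integral_fps_X_power)

lemma fps_mod2_qpoch_neg_trunc: "1 \<le> n \<Longrightarrow> fps_mod2 (qpoch_neg_trunc n) = qpoch_trunc 1 (n - 1)"
proof -
  assume n: "1 \<le> n"
  have "fps_mod2 (qpoch_neg_trunc n) = (\<Prod>i\<in>{1..<n}. 1 + fps_X ^ i)"
    unfolding qpoch_neg_trunc_def
    by (simp add: fps_mod2_prod fps_mod2_add integral_fps_add integral_fps_1 integral_fps_X_power)
  also have "\<dots> = (\<Prod>i\<in>{1..n - 1}. 1 - fps_X ^ (1 * i))"
    using n by (intro prod.cong) (auto simp: bit_fps_diff_eq_add)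
  finally show ?thesis by (simp add: qpoch_trunc_def)
qed

lemma fps_mod2_qpoch_trunc: "fps_mod2 (qpoch_trunc 1 N) = (qpoch_trunc 1 N :: bit fps)"
  unfolding qpoch_trunc_def
  by (simp add: fps_mod2_prod fps_mod2_diff integral_fps_diff integral_fps_1 integral_fps_X_power)

text \<open>Modulo 2, \<open>(-q;q)\<^sub>n\<^sub>-\<^sub>1 \<equiv> (q;q)\<^sub>n\<^sub>-\<^sub>1\<close>, which agrees with \<open>(q;q)\<^sub>\<infinity>\<close> below degree \<open>n\<close>.\<close>

theorem qpoch_cube_mod2: "fps_mod2 (qpoch 1) ^ 3 = psi_mod2"
proof (rule fps_ext)
  fix d :: nat
  define n where "n = d + 1"
  have dn: "d < n" "1 \<le> n" by (simp_all add: n_def)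
  define F where "F = (qpoch_trunc 1 (n - 1) :: bit fps)"
  have E: "fps_agree n (fps_mod2 (qpoch 1)) F"
    using fps_agree_fps_mod2[OF fps_agree_qpoch[of 1 "n - 1"]] dn fps_mod2_qpoch_trunc
    unfolding F_def by simp
  have "fps_mod2 (qpoch_neg_trunc n ^ 2 * qpoch 1) = F ^ 2 * fps_mod2 (qpoch 1)"
    using fps_mod2_qpoch_neg_trunc[OF dn(2)]
    by (simp add: F_def fps_mod2_mult fps_mod2_power integral_fps_power integral_fps_qpoch_neg_trunc
        integral_fps_qpoch)
  moreover have "fps_agree n (F ^ 2 * fps_mod2 (qpoch 1)) (F ^ 2 * F)"
    by (intro fps_agree_mult fps_agree_refl E)
  moreover have "fps_agree n (fps_mod2 (qpoch 1) ^ 3) (F ^ 3)"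
    by (intro fps_agree_power E)
  ultimately have "(fps_mod2 (qpoch 1) ^ 3) $ d = fps_mod2 (qpoch_neg_trunc n ^ 2 * qpoch 1) $ d"
    using dn by (simp add: fps_agree_def power_Suc2 power2_eq_square power3_eq_cube)
  also have "\<dots> = psi_mod2 $ d"
    using qpoch_neg_trunc_square_mult_qpoch_nth[OF dn(1)] by (simp add: fps_mod2_nth psi_mod2_nth)
  finally show "(fps_mod2 (qpoch 1) ^ 3) $ d = psi_mod2 $ d" .
qed

section \<open>The identity \<open>\<psi>(q) \<psi>(q\<^sup>3) \<equiv> \<psi>(q\<^sup>4) + q \<psi>(q\<^sup>1\<^sup>2)\<close> modulo 2\<close>

definition tri_index :: "int \<Rightarrow> nat" where
  "tri_index x = nat ((x ^ 2 - 1) div 8)"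

lemma odd_square_eq_tri_index: "odd x \<Longrightarrow> x ^ 2 = 8 * int (tri_index x) + 1"
proof -
  assume "odd x"
  then obtain r where r: "x = 2 * r + 1" by (elim oddE)
  have "even (r * (r + 1))" by simp
  then obtain s where s: "r * (r + 1) = 2 * s" by (elim evenE)
  have "0 \<le> r * (r + 1)"
    by (cases "r \<ge> 0") (simp_all add: mult_nonpos_nonpos)
  moreover have "x ^ 2 = 8 * s + 1" using r s by (simp add: power2_eq_square algebra_simps)
  ultimately show ?thesis using s by (simp add: tri_index_def)
qed

lemma triangular_tri_index: "odd x \<Longrightarrow> triangular (tri_index x)"
  unfolding triangular_iff_int using odd_square_eq_tri_index[of x]
  by (intro exI[of _ "\<bar>x\<bar>"]) auto

lemma tri_index_eq_iff: "0 < x \<Longrightarrow> x ^ 2 = 8 * int n + 1 \<Longrightarrow> tri_index x = n"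
  by (simp add: tri_index_def)

text \<open>Solutions of \<open>8N + 4 = x\<^sup>2 + 3y\<^sup>2\<close> in odd \<open>x, y > 0\<close> correspond to pairs of triangular
  numbers \<open>i + 3j = N\<close>.\<close>

definition reps :: "nat \<Rightarrow> (int \<times> int) set" where
  "reps N = {(x, y). 0 < x \<and> 0 < y \<and> odd x \<and> odd y \<and> x ^ 2 + 3 * y ^ 2 = 8 * int N + 4}"

definition tri_splits :: "nat \<Rightarrow> nat set" where
  "tri_splits N = {i\<in>{0..N}. triangular i \<and> 3 dvd (N - i) \<and> triangular ((N - i) div 3)}"

lemma finite_reps: "finite (reps N)"
proof (rule finite_subset)
  show "reps N \<subseteq> {1..8 * int N + 4} \<times> {1..8 * int N + 4}"
  proof
    fix p assume "p \<in> reps N"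
    then obtain x y where p: "p = (x, y)" "0 < x" "0 < y" "x ^ 2 + 3 * y ^ 2 = 8 * int N + 4"
      by (auto simp: reps_def)
    moreover have "x \<le> x ^ 2" "y \<le> y ^ 2" using p by (simp_all add: power2_eq_square)
    ultimately show "p \<in> {1..8 * int N + 4} \<times> {1..8 * int N + 4}" by auto
  qed
qed simp

lemma reps_tri_index:
  assumes "(x, y) \<in> reps N"
  shows "tri_index x + 3 * tri_index y = N"
  using assms odd_square_eq_tri_index[of x] odd_square_eq_tri_index[of y] by (auto simp: reps_def)

lemma bij_betw_reps_tri_splits: "bij_betw (\<lambda>(x, y). tri_index x) (reps N) (tri_splits N)"
proof (rule bij_betw_imageI)
  show "inj_on (\<lambda>(x, y). tri_index x) (reps N)"
  proof (rule inj_onI, clarify)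
    fix x y x' y' assume p: "(x, y) \<in> reps N" and q: "(x', y') \<in> reps N"
      and eq: "tri_index x = tri_index x'"
    have "tri_index y = tri_index y'" using reps_tri_index[OF p] reps_tri_index[OF q] eq by simp
    with eq p q have "x ^ 2 = x' ^ 2" "y ^ 2 = y' ^ 2"
      by (auto simp: reps_def odd_square_eq_tri_index)
    with p q show "x = x' \<and> y = y'" by (simp add: reps_def power2_eq_iff_nonneg)
  qed
  show "(\<lambda>(x, y). tri_index x) ` reps N = tri_splits N"
  proof safe
    fix x y assume p: "(x, y) \<in> reps N"
    then have "odd x" "odd y" by (auto simp: reps_def)
    with reps_tri_index[OF p] show "tri_index x \<in> tri_splits N"
      by (auto simp: tri_splits_def triangular_tri_index)
  next
    fix i assume i: "i \<in> tri_splits N"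
    define j where "j = (N - i) div 3"
    have j: "N = i + 3 * j" and ti: "triangular i" and tj: "triangular j"
      using i by (auto simp: tri_splits_def j_def)
    obtain x where x: "0 < x" "x ^ 2 = 8 * int i + 1" using ti triangular_iff_int by blast
    obtain y where y: "0 < y" "y ^ 2 = 8 * int j + 1" using tj triangular_iff_int by blast
    have "odd x" "odd y" using x y by (auto dest: odd_of_square_eq)
    with x y j have "(x, y) \<in> reps N" by (simp add: reps_def)
    moreover have "tri_index x = i" using x by (rule tri_index_eq_iff)
    ultimately show "i \<in> (\<lambda>(x, y). tri_index x) ` reps N" by force
  qed
qed

lemma psi_mod2_mult_compose_3_nth:
  "(psi_mod2 * (psi_mod2 oo fps_X ^ 3)) $ N = of_nat (card (reps N))"
proof -
  have "(psi_mod2 * (psi_mod2 oo fps_X ^ 3)) $ N = (\<Sum>i\<in>{0..N}. if i \<in> tri_splits N then 1 else 0)"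
    unfolding fps_mult_nth
    by (intro sum.cong refl) (auto simp: psi_mod2_nth fps_compose_X_power_nth tri_splits_def)
  also have "\<dots> = (\<Sum>i\<in>{0..N} \<inter> tri_splits N. 1)"
    by (rule sum.inter_restrict[symmetric]) simp
  also have "{0..N} \<inter> tri_splits N = tri_splits N" by (auto simp: tri_splits_def)
  also have "(\<Sum>i\<in>tri_splits N. 1) = (of_nat (card (tri_splits N)) :: bit)" by simp
  also have "card (tri_splits N) = card (reps N)"
    using bij_betw_same_card[OF bij_betw_reps_tri_splits] by simp
  finally show ?thesis .
qed

text \<open>Multiplication of \<open>x + y\<surd>-3\<close> by the unit \<open>(1 + \<surd>-3)/2\<close> or \<open>(1 - \<surd>-3)/2\<close>
  (whichever keeps the coordinates odd), followed by taking absolute values.\<close>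

definition reps_invol :: "int \<times> int \<Rightarrow> int \<times> int" where
  "reps_invol = (\<lambda>(x, y). if (x - y) mod 4 = 0 then (\<bar>x - 3 * y\<bar> div 2, (x + y) div 2)
                           else ((x + 3 * y) div 2, \<bar>x - y\<bar> div 2))"

lemma reps_invol_0:
  assumes "x = y + 4 * t"
  shows "reps_invol (x, y) = (\<bar>2 * t - y\<bar>, y + 2 * t)"
proof -
  have "x - 3 * y = 2 * (2 * t - y)" "x + y = 2 * (y + 2 * t)" using assms by simp_all
  then show ?thesis using assms unfolding reps_invol_def by (simp add: abs_mult)
qed

lemma reps_invol_2:
  assumes "x = y + 4 * t + 2"
  shows "reps_invol (x, y) = (2 * y + 2 * t + 1, \<bar>2 * t + 1\<bar>)"
proof -
  have "(x - y) mod 4 = 2" "x + 3 * y = 2 * (2 * y + 2 * t + 1)" "x - y = 2 * (2 * t + 1)"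
    using assms by simp_all
  then show ?thesis unfolding reps_invol_def by (simp add: abs_mult)
qed

lemma odd_diff_cases:
  assumes "odd (x::int)" "odd y"
  obtains t where "x = y + 4 * t" | t where "x = y + 4 * t + 2"
proof -
  have "even (x - y)" using assms by simp
  then obtain u where u: "x - y = 2 * u" by (elim evenE)
  show ?thesis
  proof (cases "even u")
    case True
    then show ?thesis using u that(1)[of "u div 2"] by (auto elim!: evenE)
  next
    case False
    then show ?thesis using u that(2)[of "u div 2"] by (auto elim!: oddE)
  qed
qed

lemma reps_invol_in_reps:
  assumes "(x, y) \<in> reps N"
  shows "reps_invol (x, y) \<in> reps N"
proof -
  have xy: "0 < x" "0 < y" "odd x" "odd y" "x ^ 2 + 3 * y ^ 2 = 8 * int N + 4"
    using assms by (auto simp: reps_def)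
  from odd_diff_cases[OF xy(3,4)] show ?thesis
  proof cases
    case (1 t)
    have "2 * t - y \<noteq> 0" using xy(4) by presburger
    moreover have "\<bar>2 * t - y\<bar> ^ 2 + 3 * (y + 2 * t) ^ 2 = 8 * int N + 4"
      using xy(5) 1 by (simp add: power2_eq_square algebra_simps)
    ultimately show ?thesis using xy 1 by (simp add: reps_invol_0 reps_def)
  next
    case (2 t)
    have "2 * t + 1 \<noteq> 0" by presburger
    moreover have "(2 * y + 2 * t + 1) ^ 2 + 3 * \<bar>2 * t + 1\<bar> ^ 2 = 8 * int N + 4"
      using xy(5) 2 by (simp add: power2_eq_square algebra_simps)
    ultimately show ?thesis using xy 2 by (simp add: reps_invol_2 reps_def)
  qed
qed

lemma reps_invol_reps_invol:
  assumes "(x, y) \<in> reps N"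
  shows "reps_invol (reps_invol (x, y)) = (x, y)"
proof -
  have xy: "0 < x" "0 < y" "odd x" "odd y" using assms by (auto simp: reps_def)
  then obtain s where s: "y = 2 * s + 1" by (elim oddE)
  from odd_diff_cases[OF xy(3,4)] show ?thesis
  proof cases
    case (1 t)
    have "reps_invol (\<bar>2 * t - y\<bar>, y + 2 * t) = (x, y)"
    proof (cases "2 * t \<ge> y")
      case True
      have "reps_invol (\<bar>2 * t - y\<bar>, y + 2 * t)
          = (2 * (y + 2 * t) + 2 * (- s - 1) + 1, \<bar>2 * (- s - 1) + 1\<bar>)"
        by (rule reps_invol_2) (use True s in simp)
      then show ?thesis using 1 s xy(2) by simp
    next
      case False
      have "reps_invol (\<bar>2 * t - y\<bar>, y + 2 * t) = (\<bar>2 * (- t) - (y + 2 * t)\<bar>, (y + 2 * t) + 2 * (- t))"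
        by (rule reps_invol_0) (use False in simp)
      then show ?thesis using 1 xy(1) by simp
    qed
    then show ?thesis by (simp add: reps_invol_0[OF 1])
  next
    case (2 t)
    have "reps_invol (2 * y + 2 * t + 1, \<bar>2 * t + 1\<bar>) = (x, y)"
    proof (cases "2 * t + 1 > 0")
      case True
      have "reps_invol (2 * y + 2 * t + 1, \<bar>2 * t + 1\<bar>) = (2 * \<bar>2 * t + 1\<bar> + 2 * s + 1, \<bar>2 * s + 1\<bar>)"
        by (rule reps_invol_2) (use True s in simp)
      then show ?thesis using 2 s True xy(2) by simp
    next
      case False
      have "reps_invol (2 * y + 2 * t + 1, \<bar>2 * t + 1\<bar>)
          = (\<bar>2 * (s + 1 + t) - \<bar>2 * t + 1\<bar>\<bar>, \<bar>2 * t + 1\<bar> + 2 * (s + 1 + t))"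
        by (rule reps_invol_0) (use False s in simp)
      then show ?thesis using 2 s False xy(1) by simp
    qed
    then show ?thesis by (simp add: reps_invol_2[OF 2])
  qed
qed

lemma reps_invol_eq_self_iff:
  assumes "(x, y) \<in> reps N"
  shows "reps_invol (x, y) = (x, y) \<longleftrightarrow> x = y \<or> x = 3 * y"
proof -
  have xy: "0 < y" "odd x" "odd y" using assms by (auto simp: reps_def)
  from odd_diff_cases[OF xy(2,3)] show ?thesis
  proof cases
    case (1 t)
    have "x \<noteq> 3 * y" using 1 xy(3) by presburger
    then show ?thesis using 1 xy(1) by (auto simp: reps_invol_0)
  next
    case (2 t)
    have "x \<noteq> y" using 2 by presburger
    then show ?thesis using 2 xy(1) by (auto simp: reps_invol_2)
  qed
qed

lemma card_reps_diag:
  "card {p\<in>reps N. fst p = snd p} = (if 4 dvd N \<and> triangular (N div 4) then 1 else 0)"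
proof (cases "4 dvd N \<and> triangular (N div 4)")
  case True
  then obtain w where w: "0 < w" "w ^ 2 = 8 * int (N div 4) + 1" using triangular_iff_int by blast
  have N: "int N = 4 * int (N div 4)" using True by auto
  have "p \<in> reps N \<and> fst p = snd p \<longleftrightarrow> p = (w, w)" for p
  proof
    assume "p \<in> reps N \<and> fst p = snd p"
    then obtain y where "p = (y, y)" "y ^ 2 = w ^ 2" "0 < y" using w N by (cases p) (auto simp: reps_def)
    then show "p = (w, w)" using w(1) by (simp add: power2_eq_iff_nonneg)
  qed (use w N odd_of_square_eq[OF w(2)] in \<open>simp add: reps_def\<close>)
  then have "{p\<in>reps N. fst p = snd p} = {(w, w)}" by blast
  then show ?thesis using True by simp
next
  case False
  have E: "{p\<in>reps N. fst p = snd p} = {}"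
  proof safe
    fix x y assume p: "(x, y) \<in> reps N" "fst (x, y) = snd (x, y)"
    then have "N = 4 * tri_index y" using reps_tri_index[OF p(1)] by simp
    moreover have "odd y" using p by (simp add: reps_def)
    ultimately show "(x, y) \<in> {}" using False triangular_tri_index by simp
  qed
  show ?thesis unfolding E using False by simp
qed

lemma card_reps_triple:
  "card {p\<in>reps N. fst p = 3 * snd p}
    = (if N \<noteq> 0 \<and> 12 dvd (N - 1) \<and> triangular ((N - 1) div 12) then 1 else 0)"
proof (cases "N \<noteq> 0 \<and> 12 dvd (N - 1) \<and> triangular ((N - 1) div 12)")
  case True
  then obtain w where w: "0 < w" "w ^ 2 = 8 * int ((N - 1) div 12) + 1" using triangular_iff_int by blast
  have N: "int N = 12 * int ((N - 1) div 12) + 1" using True by auto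
  have "p \<in> reps N \<and> fst p = 3 * snd p \<longleftrightarrow> p = (3 * w, w)" for p
  proof
    assume "p \<in> reps N \<and> fst p = 3 * snd p"
    then obtain y where "p = (3 * y, y)" "y ^ 2 = w ^ 2" "0 < y"
      using w N by (cases p) (auto simp: reps_def power_mult_distrib)
    then show "p = (3 * w, w)" using w(1) by (simp add: power2_eq_iff_nonneg)
  qed (use w N odd_of_square_eq[OF w(2)] in \<open>simp add: reps_def power_mult_distrib\<close>)
  then have "{p\<in>reps N. fst p = 3 * snd p} = {(3 * w, w)}" by blast
  then show ?thesis using True by simp
next
  case False
  have E: "{p\<in>reps N. fst p = 3 * snd p} = {}"
  proof safe
    fix x y assume p: "(x, y) \<in> reps N" "fst (x, y) = 3 * snd (x, y)"
    then have "odd y" by (simp add: reps_def)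
    then have "tri_index (3 * y) = 9 * tri_index y + 1"
      using odd_square_eq_tri_index[of y] odd_square_eq_tri_index[of "3 * y"]
      by (simp add: power_mult_distrib)
    then have "N = 12 * tri_index y + 1" using p reps_tri_index by fastforce
    then show "(x, y) \<in> {}" using False triangular_tri_index[OF \<open>odd y\<close>] by simp
  qed
  show ?thesis unfolding E using False by simp
qed

lemma card_reps_mod2:
  "(of_nat (card (reps N)) :: bit)
    = of_nat (card {p\<in>reps N. fst p = snd p}) + of_nat (card {p\<in>reps N. fst p = 3 * snd p})"
proof -
  have "(of_nat (card (reps N)) :: bit) = (\<Sum>p\<in>reps N. 1)" by simp
  also have "\<dots> = (\<Sum>p\<in>{p\<in>reps N. reps_invol p = p}. 1)"
    by (rule sum_bit_eq_sum_fixpoints[OF finite_reps])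
       (auto intro: reps_invol_in_reps reps_invol_reps_invol)
  also have "{p\<in>reps N. reps_invol p = p} = {p\<in>reps N. fst p = snd p} \<union> {p\<in>reps N. fst p = 3 * snd p}"
    using reps_invol_eq_self_iff by fastforce
  also have "(\<Sum>p\<in>\<dots>. 1) = of_nat (card {p\<in>reps N. fst p = snd p} + card {p\<in>reps N. fst p = 3 * snd p})"
    by (subst card_Un_disjoint[symmetric]) (auto simp: reps_def intro: finite_subset[OF _ finite_reps])
  finally show ?thesis by simp
qed

lemma psi_mod2_mult_compose_3:
  "psi_mod2 * (psi_mod2 oo fps_X ^ 3) = (psi_mod2 oo fps_X ^ 4) + fps_X * (psi_mod2 oo fps_X ^ 12)"
proof (rule fps_ext)
  fix N
  show "(psi_mod2 * (psi_mod2 oo fps_X ^ 3)) $ N = ((psi_mod2 oo fps_X ^ 4) + fps_X * (psi_mod2 oo fps_X ^ 12)) $ N"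
    unfolding psi_mod2_mult_compose_3_nth card_reps_mod2 card_reps_diag card_reps_triple
    by (simp add: fps_compose_X_power_nth psi_mod2_nth)
qed

section \<open>The 3-dissection of \<open>\<psi>\<close> modulo 2\<close>

lemma square_mod_3: "(x::nat) ^ 2 mod 3 = (if x mod 3 = 0 then 0 else 1)"
proof -
  have "x ^ 2 mod 3 = (x mod 3) ^ 2 mod 3" by (simp add: power_mod)
  moreover have "x mod 3 < 3" by simp
  ultimately show ?thesis
    by (cases "x mod 3"; cases "x mod 3 - 1"; simp add: power2_eq_square)
qed

lemma not_triangular_if_mod_3_eq_2: "n mod 3 = 2 \<Longrightarrow> \<not> triangular n"
proof
  assume n: "n mod 3 = 2" and "triangular n"
  then obtain x where x: "x ^ 2 = 8 * n + 1" by (auto simp: triangular_def)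
  have "(8 * n + 1) mod 3 = 2" using n by presburger
  then show False using x square_mod_3[of x] by (simp split: if_splits)
qed

lemma triangular_3_mult_plus_1_iff: "triangular (3 * m + 1) \<longleftrightarrow> 3 dvd m \<and> triangular (m div 3)"
proof
  assume "triangular (3 * m + 1)"
  then obtain x where x: "x ^ 2 = 8 * (3 * m + 1) + 1" by (auto simp: triangular_def)
  then have "x mod 3 = 0" using square_mod_3[of x] by (simp split: if_splits)
  then obtain z where "x = 3 * z" by (auto elim!: dvdE simp: mod_eq_0_iff_dvd)
  then have z: "3 * z ^ 2 = 8 * m + 3" using x by (simp add: power2_eq_square)
  then have "3 dvd m" by presburger
  then obtain j where j: "m = 3 * j" by (elim dvdE)
  then have "z ^ 2 = 8 * j + 1" using z by simp
  then show "3 dvd m \<and> triangular (m div 3)" using j by (auto simp: triangular_def)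
next
  assume "3 dvd m \<and> triangular (m div 3)"
  then obtain j z where j: "m = 3 * j" and z: "z ^ 2 = 8 * j + 1" by (auto simp: triangular_def elim!: dvdE)
  have "(3 * z) ^ 2 = 8 * (3 * m + 1) + 1" using j z by (simp add: power_mult_distrib)
  then show "triangular (3 * m + 1)" unfolding triangular_def by (rule exI)
qed

lemma psi_mod2_3_dissection:
  "psi_mod2 = (Abs_fps (\<lambda>n. psi_mod2 $ (3 * n)) oo fps_X ^ 3) + fps_X * ((psi_mod2 oo fps_X ^ 3) oo fps_X ^ 3)"
proof (rule fps_ext)
  fix n :: nat
  have c9: "(psi_mod2 oo fps_X ^ 3) oo fps_X ^ 3 = psi_mod2 oo fps_X ^ 9"
    by (simp add: fps_compose_X_power_X_power)
  consider (mod_0) "n mod 3 = 0" | (mod_1) "n mod 3 = 1" | (mod_2) "n mod 3 = 2"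
    by linarith
  then show "psi_mod2 $ n
      = ((Abs_fps (\<lambda>n. psi_mod2 $ (3 * n)) oo fps_X ^ 3) + fps_X * ((psi_mod2 oo fps_X ^ 3) oo fps_X ^ 3)) $ n"
  proof cases
    case mod_0
    then have "3 dvd n" "n = 0 \<or> \<not> 9 dvd (n - 1)" by presburger+
    then show ?thesis unfolding c9 by (auto simp: fps_compose_X_power_nth)
  next
    case mod_1
    define m where "m = n div 3"
    have n: "n = 3 * m + 1" using mod_1 div_mult_mod_eq[of n 3] unfolding m_def by linarith
    then have "\<not> 3 dvd n" "9 dvd (n - 1) \<longleftrightarrow> 3 dvd m" "(n - 1) div 9 = m div 3" by presburger+
    then show ?thesis using n triangular_3_mult_plus_1_iff[of m] unfolding c9
      by (auto simp: fps_compose_X_power_nth psi_mod2_nth)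
  next
    case mod_2
    then have "\<not> 3 dvd n" "\<not> 9 dvd (n - 1)" by presburger+
    then show ?thesis using not_triangular_if_mod_3_eq_2[OF mod_2] unfolding c9
      by (auto simp: fps_compose_X_power_nth psi_mod2_nth)
  qed
qed

section \<open>Reduction of \<open>j\<^sub>6\<close> modulo 2\<close>

lemma fps_eq_mult_inverse:
  fixes f :: "'a::field fps"
  assumes "f $ 0 \<noteq> 0" "g * f = h"
  shows "g = h * inverse f"
proof -
  have "f * inverse f = 1" using assms(1) by (rule inverse_mult_eq_1')
  then have "g = g * (f * inverse f)" by simp
  also have "\<dots> = h * inverse f" using assms(2) by (simp add: mult.assoc[symmetric])
  finally show ?thesis .
qed

lemma fps_compose_X_power_mult:
  fixes f :: "'a::idom fps"
  shows "k > 0 \<Longrightarrow> (f * g) oo fps_X ^ k = (f oo fps_X ^ k) * (g oo fps_X ^ k)"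
  by (simp add: fps_compose_mult_distrib)

lemma fps_compose_X_power_inverse:
  fixes f :: "'a::field fps"
  shows "k > 0 \<Longrightarrow> f $ 0 \<noteq> 0 \<Longrightarrow> inverse f oo fps_X ^ k = inverse (f oo fps_X ^ k)"
  by (simp add: fps_inverse_compose)

lemma fps_section_nth:
  fixes f g :: "'a::comm_ring_1 fps"
  assumes "1 < k"
  shows "((f oo fps_X ^ k) + fps_X * (g oo fps_X ^ k)) $ (k * n) = f $ n"
    and "((f oo fps_X ^ k) + fps_X * (g oo fps_X ^ k)) $ (k * n + 1) = g $ n"
proof -
  have "\<not> k dvd k * n - 1" if "n > 0"
  proof
    assume "k dvd k * n - 1"
    then have "k dvd k * n - (k * n - 1)" by (rule dvd_diff_nat[rotated]) simp
    moreover have "k * n - (k * n - 1) = 1" using assms that by simp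
    ultimately show False using assms by simp
  qed
  moreover have "\<not> k dvd k * n + 1"
    using assms dvd_add_right_iff[of k "k * n" 1] by auto
  ultimately show "((f oo fps_X ^ k) + fps_X * (g oo fps_X ^ k)) $ (k * n) = f $ n"
    and "((f oo fps_X ^ k) + fps_X * (g oo fps_X ^ k)) $ (k * n + 1) = g $ n"
    using assms by (auto simp: fps_compose_X_power_nth)
qed

lemma fps_mod2_j6_series_eq_qpoch:
  "fps_mod2 j6_series = (fps_mod2 (qpoch 2) * fps_mod2 (qpoch 3) ^ 3
      * inverse (fps_mod2 (qpoch 1) * fps_mod2 (qpoch 6) ^ 3)) ^ 3"
proof -
  define B where "B = qpoch 1 * qpoch 6 ^ 3"
  have B: "integral_fps B" "B $ 0 = 1"
    by (simp_all add: B_def integral_fps_mult integral_fps_power integral_fps_qpoch fps_power_zeroth)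
  have A: "integral_fps (qpoch 2 * qpoch 3 ^ 3)"
    by (simp add: integral_fps_mult integral_fps_power integral_fps_qpoch)
  have "fps_mod2 j6_series = fps_mod2 (qpoch 2 * qpoch 3 ^ 3 * inverse B) ^ 3"
    unfolding j6_series_def B_def[symmetric]
    by (intro fps_mod2_power integral_fps_mult A integral_fps_inverse B)
  also have "fps_mod2 (qpoch 2 * qpoch 3 ^ 3 * inverse B) = fps_mod2 (qpoch 2 * qpoch 3 ^ 3) * inverse (fps_mod2 B)"
    by (simp add: fps_mod2_mult A integral_fps_inverse B fps_mod2_inverse)
  finally show ?thesis
    by (simp add: B_def fps_mod2_mult fps_mod2_power integral_fps_power integral_fps_qpoch)
qed

lemma fps_mod2_j6_series: "fps_mod2 j6_series = psi_mod2 * (inverse (psi_mod2 ^ 3) oo fps_X ^ 3)"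
proof -
  define E where "E = fps_mod2 (qpoch 1)"
  define E3 where "E3 = E oo fps_X ^ 3"
  have E0: "E $ 0 = 1" "E3 $ 0 = 1" by (simp_all add: E_def E3_def fps_mod2_nth)
  have E2: "fps_mod2 (qpoch 2) = E ^ 2"
    unfolding E_def fps_mod2_qpoch[OF zero_less_numeral] by (rule bit_fps_square[symmetric])
  have E3: "fps_mod2 (qpoch 3) = E3"
    using fps_mod2_qpoch[of 3] by (simp add: E_def E3_def)
  have "fps_mod2 (qpoch 6) = E oo fps_X ^ (3 * 2)"
    unfolding E_def by (simp add: fps_mod2_qpoch[OF zero_less_numeral])
  also have "\<dots> = E3 oo fps_X ^ 2" by (simp add: E3_def fps_compose_X_power_X_power)
  finally have E6: "fps_mod2 (qpoch 6) = E3 ^ 2" using bit_fps_square[of E3] by simp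
  define W where "W = E ^ 2 * E3 ^ 3 * inverse (E * (E3 ^ 2) ^ 3)"
  have "W * E3 ^ 3 = E * ((E * (E3 ^ 2) ^ 3) * inverse (E * (E3 ^ 2) ^ 3))"
    unfolding W_def by (simp add: algebra_simps power2_eq_square flip: power_mult power_add)
  also have "\<dots> = E" using E0 by (simp add: inverse_mult_eq_1' fps_power_zeroth)
  finally have W: "W * E3 ^ 3 = E" .
  have E33: "E3 ^ 3 = psi_mod2 oo fps_X ^ 3"
    by (simp add: E3_def E_def fps_compose_power flip: qpoch_cube_mod2)
  have "fps_mod2 j6_series * (psi_mod2 oo fps_X ^ 3) ^ 3 = (W * E3 ^ 3) ^ 3"
    by (simp add: fps_mod2_j6_series_eq_qpoch E2 E3 E6 W_def E33 power_mult_distrib E_def)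
  also have "\<dots> = psi_mod2" unfolding W E_def by (rule qpoch_cube_mod2)
  finally have "fps_mod2 j6_series = psi_mod2 * inverse ((psi_mod2 oo fps_X ^ 3) ^ 3)"
    by (rule fps_eq_mult_inverse[rotated]) (simp add: fps_power_zeroth)
  then show ?thesis
    by (simp add: fps_compose_power fps_compose_X_power_inverse fps_power_zeroth)
qed

lemma fps_mod2_j6_series_nth_3_mult_plus_1:
  "fps_mod2 j6_series $ (3 * M + 1) = ((psi_mod2 oo fps_X ^ 3) * inverse (psi_mod2 ^ 3)) $ M"
proof -
  define D where "D = inverse (psi_mod2 ^ 3)"
  have "fps_mod2 j6_series = ((Abs_fps (\<lambda>n. psi_mod2 $ (3 * n)) * D) oo fps_X ^ 3)
      + fps_X * (((psi_mod2 oo fps_X ^ 3) * D) oo fps_X ^ 3)"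
    unfolding fps_mod2_j6_series D_def[symmetric]
    by (subst psi_mod2_3_dissection) (simp add: fps_compose_X_power_mult algebra_simps)
  then show ?thesis using fps_section_nth(2)[of 3] by (simp add: D_def)
qed

lemma psi_mod2_compose_3_div_cube:
  "(psi_mod2 oo fps_X ^ 3) * inverse (psi_mod2 ^ 3)
    = 1 + fps_X * (((psi_mod2 oo fps_X ^ 3) * inverse psi_mod2) oo fps_X ^ 4)"
proof -
  have "(psi_mod2 oo fps_X ^ 3) * inverse (psi_mod2 ^ 3) * (psi_mod2 oo fps_X ^ 4)
      = psi_mod2 * (psi_mod2 oo fps_X ^ 3) * (psi_mod2 ^ 3 * inverse (psi_mod2 ^ 3))"
    using power_add[of psi_mod2 3 1] by (simp add: mult_ac flip: bit_fps_power4)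
  also have "\<dots> = (psi_mod2 oo fps_X ^ 4) + fps_X * (psi_mod2 oo fps_X ^ 12)"
    by (simp add: inverse_mult_eq_1' fps_power_zeroth psi_mod2_mult_compose_3)
  finally have "(psi_mod2 oo fps_X ^ 3) * inverse (psi_mod2 ^ 3)
      = ((psi_mod2 oo fps_X ^ 4) + fps_X * (psi_mod2 oo fps_X ^ 12)) * inverse (psi_mod2 oo fps_X ^ 4)"
    by (rule fps_eq_mult_inverse[rotated]) simp
  also have "\<dots> = 1 + fps_X * ((psi_mod2 oo fps_X ^ 12) * inverse (psi_mod2 oo fps_X ^ 4))"
    by (simp add: algebra_simps inverse_mult_eq_1')
  also have "(psi_mod2 oo fps_X ^ 12) * inverse (psi_mod2 oo fps_X ^ 4)
      = ((psi_mod2 oo fps_X ^ 3) * inverse psi_mod2) oo fps_X ^ 4"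
    using fps_compose_X_power_X_power[of 3 4 psi_mod2]
    by (simp add: fps_compose_X_power_mult fps_compose_X_power_inverse)
  finally show ?thesis .
qed

lemma psi_mod2_compose_3_div:
  "(psi_mod2 oo fps_X ^ 3) * inverse psi_mod2
    = (psi_mod2 oo fps_X ^ 2) + fps_X * (((psi_mod2 oo fps_X ^ 6) * inverse psi_mod2) oo fps_X ^ 2)"
proof -
  have "(psi_mod2 oo fps_X ^ 3) * inverse psi_mod2 * (psi_mod2 oo fps_X ^ 2)
      = psi_mod2 * (psi_mod2 oo fps_X ^ 3) * (psi_mod2 * inverse psi_mod2)"
    unfolding bit_fps_square[of psi_mod2, symmetric] by (simp add: mult_ac power2_eq_square)
  also have "\<dots> = (psi_mod2 oo fps_X ^ 4) + fps_X * (psi_mod2 oo fps_X ^ 12)"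
    by (simp add: inverse_mult_eq_1' psi_mod2_mult_compose_3)
  finally have "(psi_mod2 oo fps_X ^ 3) * inverse psi_mod2
      = ((psi_mod2 oo fps_X ^ 4) + fps_X * (psi_mod2 oo fps_X ^ 12)) * inverse (psi_mod2 oo fps_X ^ 2)"
    by (rule fps_eq_mult_inverse[rotated]) simp
  also have "\<dots> = ((psi_mod2 ^ 2 * inverse psi_mod2) oo fps_X ^ 2)
      + fps_X * (((psi_mod2 oo fps_X ^ 6) * inverse psi_mod2) oo fps_X ^ 2)"
    using fps_compose_X_power_X_power[of 2 2 psi_mod2] fps_compose_X_power_X_power[of 6 2 psi_mod2]
    by (simp add: algebra_simps fps_compose_X_power_mult fps_compose_X_power_inverse
        bit_fps_square[of psi_mod2])
  also have "psi_mod2 ^ 2 * inverse psi_mod2 = psi_mod2"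
    by (simp add: power2_eq_square mult.assoc inverse_mult_eq_1')
  finally show ?thesis .
qed

lemma fps_mod2_j6_series_nth: "fps_mod2 j6_series $ (3 * (8 * n + 1) + 1) = psi_mod2 $ n"
proof -
  define H where "H = (psi_mod2 oo fps_X ^ 3) * inverse psi_mod2"
  have "fps_mod2 j6_series $ (3 * (8 * n + 1) + 1) = (1 + fps_X * (H oo fps_X ^ 4)) $ (8 * n + 1)"
    unfolding fps_mod2_j6_series_nth_3_mult_plus_1 psi_mod2_compose_3_div_cube H_def ..
  also have "\<dots> = H $ (2 * n)"
    by (simp add: fps_compose_X_power_nth)
  also have "\<dots> = psi_mod2 $ n"
    unfolding H_def psi_mod2_compose_3_div by (rule fps_section_nth(1)) simp
  finally show ?thesis .
qed

lemma of_int_bit: "(of_int z :: bit) = (if even z then 0 else 1)"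
proof -
  have "(of_int z :: bit) = of_int (2 * (z div 2)) + of_int (z mod 2)"
    by (metis div_mult_mod_eq of_int_add mult.commute)
  also have "(of_int (2 * (z div 2)) :: bit) = 0" by simp
  also have "z mod 2 = (if even z then 0 else 1)" by (simp add: odd_iff_mod_2_eq_one)
  finally show ?thesis by (auto split: if_splits)
qed

lemma integral_fps_nth_diff_even:
  assumes "integral_fps f" "fps_mod2 f $ a = fps_mod2 f $ b"
  shows "\<exists>m::int. f $ a - f $ b = of_int (2 * m)"
proof -
  have "even (\<lfloor>f $ a\<rfloor> - \<lfloor>f $ b\<rfloor>)"
    using assms(2) by (simp add: fps_mod2_nth of_int_bit split: if_splits)
  then obtain m where "\<lfloor>f $ a\<rfloor> - \<lfloor>f $ b\<rfloor> = 2 * m" by (elim evenE)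
  then have "f $ a - f $ b = of_int (2 * m)"
    using integral_fps_nth[OF assms(1), of a] integral_fps_nth[OF assms(1), of b]
    by (metis of_int_diff)
  then show ?thesis ..
qed

lemma integral_fps_j6_series: "integral_fps j6_series"
  unfolding j6_series_def
  by (intro integral_fps_power integral_fps_mult integral_fps_qpoch integral_fps_inverse)
     (simp_all add: fps_power_zeroth)

lemma odd_square_mult_8_plus_1:
  assumes "odd (d::nat)"
  obtains n' where "d ^ 2 * (8 * n + 1) = 8 * n' + 1"
proof -
  obtain r where r: "d = 2 * r + 1" using assms by (elim oddE)
  have "even (r * (r + 1))" by simp
  then obtain s where "r * (r + 1) = 2 * s" by (elim evenE)
  then have "d ^ 2 = 8 * s + 1" using r by (simp add: power2_eq_square algebra_simps)
  then show ?thesis using that[of "8 * s * n + s + n"] by (simp add: algebra_simps)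
qed

lemma triangular_square_mult_iff:
  assumes "d ^ 2 * (8 * n + 1) = 8 * n' + 1" "d > 0"
  shows "triangular n' \<longleftrightarrow> triangular n"
proof
  assume "triangular n'"
  then obtain y where y: "y ^ 2 = d ^ 2 * (8 * n + 1)" using assms(1) by (auto simp: triangular_def)
  then have "d ^ 2 dvd y ^ 2" by simp
  then have "d dvd y" by simp
  then obtain z where "y = d * z" by (elim dvdE)
  then have "d ^ 2 * z ^ 2 = d ^ 2 * (8 * n + 1)" using y by (simp add: power_mult_distrib)
  moreover have "d ^ 2 \<noteq> 0" using assms(2) by simp
  ultimately have "z ^ 2 = 8 * n + 1" by (metis mult_left_cancel)
  then show "triangular n" by (auto simp: triangular_def)
next
  assume "triangular n"
  then obtain z where "z ^ 2 = 8 * n + 1" by (auto simp: triangular_def)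
  then have "(d * z) ^ 2 = 8 * n' + 1" using assms(1) by (simp add: power_mult_distrib)
  then show "triangular n'" unfolding triangular_def by (rule exI)
qed

theorem corollary3p7:
  fixes k p :: nat
  assumes "k > 0" and "prime p" and "p mod 8 \<in> {3, 5, 7}"
  shows "\<forall>n::nat. \<exists>m::int.
           J6 (24 * n + 3) - J6 (3 * p ^ (2 * k) * (8 * n + 1)) = of_int (2 * m)"
proof
  fix n :: nat
  have "p mod 8 = 3 \<or> p mod 8 = 5 \<or> p mod 8 = 7" using assms(3) by simp
  then have "odd (p ^ k)" by simp presburger
  then obtain n' where n': "(p ^ k) ^ 2 * (8 * n + 1) = 8 * n' + 1"
    by (rule odd_square_mult_8_plus_1)
  have "triangular n' \<longleftrightarrow> triangular n"
    using n' \<open>odd (p ^ k)\<close> by (intro triangular_square_mult_iff) (auto simp: odd_pos)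
  then have "fps_mod2 j6_series $ (3 * (8 * n + 1) + 1) = fps_mod2 j6_series $ (3 * (8 * n' + 1) + 1)"
    using fps_mod2_j6_series_nth[of n] fps_mod2_j6_series_nth[of n'] by (simp add: psi_mod2_nth)
  then obtain m where "j6_series $ (3 * (8 * n + 1) + 1) - j6_series $ (3 * (8 * n' + 1) + 1) = of_int (2 * m)"
    using integral_fps_nth_diff_even[OF integral_fps_j6_series] by blast
  moreover have "3 * p ^ (2 * k) * (8 * n + 1) = 3 * (8 * n' + 1)"
    using n' by (simp add: power_even_eq)
  ultimately show "\<exists>m::int. J6 (24 * n + 3) - J6 (3 * p ^ (2 * k) * (8 * n + 1)) = of_int (2 * m)"
    by (auto simp: J6_def)
qed

end
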